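(* Let $G$ be a finite abelian group and $\mathcal{H}$ a finite dimensional complex Hilbert space with $\dim\mathcal{H}\geq 2$. In each of the following two cases there exists no $U$-covariant pure-state informationally complete observable (based on $G/H$ for any proper subgroup $H$ of $G$): (a) $U$ is a unitary representation of $G$ on $\mathcal{H}$; (b) $G$ is cyclic and $U$ is a projective unitary representation of $G$ on $\mathcal{H}$.
   Context: $\mathbb{T}$ is the group of unimodular complex numbers. A projective unitary representation of $G$ on $\mathcal{H}$ is a map $g\mapsto U(g)$ into the unitaries with $U(e)=I$ and $U(gh)=\omega(g,h)U(g)U(h)$, $\omega(g,h)\in\mathbb{T}$. An observable with finite outcome set $\Omega$ is a map $\mathsf{M}$ from $\Omega$ to positive operators on $\mathcal{H}$ with $\sum_{x\in\Omega}\mathsf{M}(x)=I$. It is pure-state informationally complete (PIC) if for any two different pure states (rank-one projections) $\varrho_1\neq\varrho_2$ there is $x\in\Omega$ with $\mathrm{tr}(\varrho_1\mathsf{M}(x))\neq\mathrm{tr}(\varrho_2\mathsf{M}(x))$. For a subgroup $H$ of $G$, $G$ acts on the set of left cosets $G/H$ by $g'\cdot gH=g'gH$; an observable $\mathsf{M}$ on $\Omega=G/H$ is $U$-covariant if $U(g)\mathsf{M}(x)U(g)^*=\mathsf{M}(g\cdot x)$ for all $g\in G$, $x\in G/H$. *)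

theory Defs
  imports "HOL-Analysis.Analysis" "HOL-Algebra.Left_Coset" "HOL-Algebra.Elementary_Groups"
begin

text \<open>The Hilbert space is \<open>complex^'n\<close> (finite dimension \<open>CARD('n)\<close>), operators are
  matrices \<open>complex^'n^'n\<close>.\<close>

definition cinner :: "complex^'n \<Rightarrow> complex^'n \<Rightarrow> complex" where
  "cinner v w = (\<Sum>i\<in>UNIV. cnj (v$i) * w$i)"

definition adj :: "complex^'n^'n \<Rightarrow> complex^'n^'n" where
  "adj A = (\<chi> i j. cnj (A$j$i))"

definition csmult :: "complex \<Rightarrow> complex^'n^'n \<Rightarrow> complex^'n^'n" where
  "csmult c A = (\<chi> i j. c * A$i$j)"

definition unitary_op :: "complex^'n^'n \<Rightarrow> bool" where
  "unitary_op U \<longleftrightarrow> adj U ** U = mat 1 \<and> U ** adj U = mat 1"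

definition positive_op :: "complex^'n^'n \<Rightarrow> bool" where
  "positive_op A \<longleftrightarrow> (\<forall>v. Im (cinner v (A *v v)) = 0 \<and> Re (cinner v (A *v v)) \<ge> 0)"

definition pure_state :: "complex^'n^'n \<Rightarrow> bool" where
  "pure_state P \<longleftrightarrow> P ** P = P \<and> adj P = P \<and> rank P = 1"

definition proj_unitary_rep :: "('g, 'b) monoid_scheme \<Rightarrow> ('g \<Rightarrow> complex^'n^'n) \<Rightarrow> bool" where
  "proj_unitary_rep G U \<longleftrightarrow>
     U \<one>\<^bsub>G\<^esub> = mat 1 \<and> (\<forall>g\<in>carrier G. unitary_op (U g)) \<and>
     (\<forall>g\<in>carrier G. \<forall>h\<in>carrier G. \<exists>\<omega>. cmod \<omega> = 1 \<and>
         U (g \<otimes>\<^bsub>G\<^esub> h) = csmult \<omega> (U g ** U h))"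

definition unitary_rep :: "('g, 'b) monoid_scheme \<Rightarrow> ('g \<Rightarrow> complex^'n^'n) \<Rightarrow> bool" where
  "unitary_rep G U \<longleftrightarrow>
     U \<one>\<^bsub>G\<^esub> = mat 1 \<and> (\<forall>g\<in>carrier G. unitary_op (U g)) \<and>
     (\<forall>g\<in>carrier G. \<forall>h\<in>carrier G. U (g \<otimes>\<^bsub>G\<^esub> h) = U g ** U h)"

definition observable :: "'x set \<Rightarrow> ('x \<Rightarrow> complex^'n^'n) \<Rightarrow> bool" where
  "observable \<Omega> M \<longleftrightarrow> finite \<Omega> \<and> (\<forall>x\<in>\<Omega>. positive_op (M x)) \<and> (\<Sum>x\<in>\<Omega>. M x) = mat 1"

definition PIC :: "'x set \<Rightarrow> ('x \<Rightarrow> complex^'n^'n) \<Rightarrow> bool" where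
  "PIC \<Omega> M \<longleftrightarrow> (\<forall>\<rho>1 \<rho>2. pure_state \<rho>1 \<longrightarrow> pure_state \<rho>2 \<longrightarrow> \<rho>1 \<noteq> \<rho>2 \<longrightarrow>
      (\<exists>x\<in>\<Omega>. trace (\<rho>1 ** M x) \<noteq> trace (\<rho>2 ** M x)))"

definition covariant :: "('g, 'b) monoid_scheme \<Rightarrow> 'g set \<Rightarrow> ('g \<Rightarrow> complex^'n^'n)
     \<Rightarrow> ('g set \<Rightarrow> complex^'n^'n) \<Rightarrow> bool" where
  "covariant G H U M \<longleftrightarrow> (\<forall>g\<in>carrier G. \<forall>x\<in>lcosets\<^bsub>G\<^esub> H.
      U g ** M x ** adj (U g) = M (g <#\<^bsub>G\<^esub> x))"

end

theory Submission
  imports Defs "HOL-Algebra.Multiplicative_Group"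
begin

text \<open>All \<open>U g\<close> commute: for a representation because \<open>G\<close> is abelian, for a projective
  representation of a cyclic group because every \<open>U g\<close> is a scalar multiple of a power of
  \<open>U\<close> applied to a generator. Commuting unitaries have a common orthonormal eigenbasis; let
  \<open>e\<^sub>1 \<bottom> e\<^sub>2\<close> be two of its vectors. For a common unit eigenvector \<open>e\<close> the expectation
  \<open>\<langle>e, M x e\<rangle>\<close> is invariant under the transitive action of \<open>G\<close> on \<open>G/H\<close>, so by
  \<open>\<Sum>\<^sub>x M x = I\<close> it equals \<open>1 / |G/H|\<close>. Hence the distinct pure states
  \<open>|e\<^sub>1\<rangle>\<langle>e\<^sub>1|\<close> and \<open>|e\<^sub>2\<rangle>\<langle>e\<^sub>2|\<close> have the same statistics.\<close>

lemma scaleR_eq_complex_scale: "(r::real) *\<^sub>R (x::complex^'n) = complex_of_real r *s x"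
  by (simp only: vec_eq_iff vector_scaleR_component vector_smult_component) (simp add: scaleR_conv_of_real)

lemma matrix_vector_mult_scaleC: "(A::complex^'n^'m) *v (c *s x) = c *s (A *v x)"
  by (simp add: vec_eq_iff matrix_vector_mult_def sum_distrib_left algebra_simps)

lemma matrix_vector_mult_complex_scaleR: "(A::complex^'n^'m) *v (c *\<^sub>R x) = c *\<^sub>R (A *v x)"
  by (simp add: scaleR_eq_complex_scale matrix_vector_mult_scaleC)

lemma cinner_adj_left: "cinner (A *v x) y = cinner x (adj A *v (y::complex^'n))"
proof -
  have "cinner (A *v x) y = (\<Sum>i\<in>UNIV. \<Sum>j\<in>UNIV. cnj (A$i$j) * cnj (x$j) * y$i)"
    unfolding cinner_def matrix_vector_mult_def by (simp add: sum_distrib_right)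
  also have "\<dots> = (\<Sum>j\<in>UNIV. \<Sum>i\<in>UNIV. cnj (A$i$j) * cnj (x$j) * y$i)"
    by (rule sum.swap)
  also have "\<dots> = cinner x (adj A *v y)"
    unfolding cinner_def matrix_vector_mult_def adj_def by (simp add: sum_distrib_left mult_ac)
  finally show ?thesis .
qed

lemma adj_adj [simp]: "adj (adj A) = A"
  by (simp add: adj_def vec_eq_iff)

lemma cinner_adj_right: "cinner x (A *v y) = cinner (adj A *v x) (y::complex^'n)"
  using cinner_adj_left[of "adj A" x y] by simp

lemma cinner_scale_right: "cinner x (c *s y) = c * cinner x y"
  unfolding cinner_def by (simp add: sum_distrib_left mult_ac)

lemma cinner_scale_left: "cinner (c *s x) y = cnj c * cinner x y"
  unfolding cinner_def by (simp add: sum_distrib_left mult_ac)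

lemma cinner_add_right: "cinner x (y + z) = cinner x y + cinner x z"
  unfolding cinner_def by (simp add: sum.distrib algebra_simps)

lemma cinner_diff_right: "cinner x (y - z) = cinner x y - cinner x z"
  unfolding cinner_def by (simp add: sum_subtractf algebra_simps)

lemma cinner_zero_right [simp]: "cinner x 0 = 0"
  by (simp add: cinner_def)

lemma cinner_commute: "cinner y x = cnj (cinner x y)"
  unfolding cinner_def by (simp add: mult_ac)

lemma inner_eq_Re_cinner: "x \<bullet> y = Re (cinner x (y::complex^'n))"
  by (simp add: cinner_def inner_vec_def inner_complex_def)

lemma cinner_self_eq_inner: "cinner x x = complex_of_real (x \<bullet> x)"
  by (simp add: complex_eq_iff inner_eq_Re_cinner) (simp add: cinner_def)

lemma cinner_self_eq_1_imp_nonzero: "cinner x x = 1 \<Longrightarrow> x \<noteq> 0"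
  by (auto simp: cinner_def)

lemma cinner_normalize_self: "x \<noteq> 0 \<Longrightarrow> cinner ((1 / norm x) *\<^sub>R x) ((1 / norm x) *\<^sub>R x) = 1"
  by (simp add: cinner_self_eq_inner power2_norm_eq_inner[symmetric] norm_eq_1[symmetric])

lemma cinner_sum_right: "cinner x (sum M S *v x) = (\<Sum>s\<in>S. cinner x (M s *v x))"
proof (cases "finite S")
  case True
  then show ?thesis
    by (induction S rule: finite_induct)
      (simp_all add: matrix_vector_mult_add_rdistrib cinner_add_right)
qed simp

lemma adj_matrix_mult: "adj (A ** B) = adj B ** adj (A::complex^'n^'n)"
  by (simp add: adj_def vec_eq_iff matrix_matrix_mult_def mult_ac)

lemma selfadjoint_inner_symmetric: "adj S = S \<Longrightarrow> (S *v x) \<bullet> y = x \<bullet> (S *v y)"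
  by (metis cinner_adj_left inner_eq_Re_cinner)

lemma csmult_matrix_mult_left: "csmult c A ** B = csmult c (A ** (B::complex^'n^'n))"
  by (simp add: csmult_def vec_eq_iff matrix_matrix_mult_def sum_distrib_left mult_ac)

lemma csmult_matrix_mult_right: "A ** csmult c B = csmult c (A ** (B::complex^'n^'n))"
  by (simp add: csmult_def vec_eq_iff matrix_matrix_mult_def sum_distrib_left mult_ac)

lemma csmult_csmult: "csmult c (csmult d A) = csmult (c * d) A"
  by (simp add: csmult_def vec_eq_iff mult_ac)

lemma csmult_matrix_vector_mult: "csmult c A *v x = c *s (A *v (x::complex^'n))"
  by (simp add: csmult_def vec_eq_iff matrix_vector_mult_def sum_distrib_left mult_ac)

lemma matrix_add_rdistrib: "(A + B) ** C = A ** C + B ** (C::'a::semiring_1^'p^'n)"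
  by (simp add: vec_eq_iff matrix_matrix_mult_def sum.distrib algebra_simps)

lemma matrix_diff_ldistrib: "A ** (B - C) = A ** B - A ** (C::'a::ring_1^'p^'n)"
  by (simp add: vec_eq_iff matrix_matrix_mult_def sum_subtractf algebra_simps)

lemma matrix_diff_rdistrib: "(A - B) ** C = A ** C - B ** (C::'a::ring_1^'p^'n)"
  by (simp add: vec_eq_iff matrix_matrix_mult_def sum_subtractf algebra_simps)

lemma unitary_commute_adj:
  assumes "unitary_op Y" "X ** Y = Y ** X"
  shows "X ** adj Y = adj Y ** (X::complex^'n^'n)"
proof -
  have "adj Y ** X = adj Y ** X ** (Y ** adj Y)" using assms(1) by (simp add: unitary_op_def)
  also have "\<dots> = adj Y ** (X ** Y) ** adj Y" by (simp add: matrix_mul_assoc)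
  also have "\<dots> = (adj Y ** Y) ** X ** adj Y" by (simp add: assms(2) matrix_mul_assoc)
  also have "\<dots> = X ** adj Y" using assms(1) by (simp add: unitary_op_def)
  finally show ?thesis by simp
qed

section \<open>Common eigenvectors of commuting self-adjoint matrices\<close>

lemma linear_coeff_zero_if_quadratic_nonpos:
  fixes a b :: real
  assumes "\<And>t. a * t + b * t\<^sup>2 \<le> 0"
  shows "a = 0"
proof (rule ccontr)
  assume "a \<noteq> 0"
  define k where "k = 1 / (\<bar>b\<bar> + 1)"
  have "k > 0" "k * (\<bar>b\<bar> + 1) = 1" by (simp_all add: k_def)
  then have "\<bar>b * k\<bar> < 1" by (simp add: abs_mult algebra_simps)
  with \<open>k > 0\<close> have "k * (1 + b * k) > 0" by (simp add: abs_less_iff)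
  with \<open>a \<noteq> 0\<close> have "a\<^sup>2 * (k * (1 + b * k)) > 0" by simp
  moreover have "a * (k * a) + b * (k * a)\<^sup>2 \<le> 0" by (rule assms)
  then have "a\<^sup>2 * (k * (1 + b * k)) \<le> 0" by (simp add: algebra_simps power2_eq_square)
  ultimately show False by simp
qed

text \<open>First-order condition at a maximum of the Rayleigh quotient on an invariant subspace.\<close>
lemma rayleigh_maximizer_is_eigenvector:
  fixes S :: "complex^'n^'n"
  assumes S: "adj S = S" and W: "subspace W" "\<And>x. x \<in> W \<Longrightarrow> S *v x \<in> W"
    and v: "v \<in> W" "v \<bullet> v = 1"
    and max: "\<And>y. y \<in> W \<Longrightarrow> y \<bullet> (S *v y) \<le> (v \<bullet> (S *v v)) * (y \<bullet> y)"
  shows "S *v v = (v \<bullet> (S *v v)) *\<^sub>R v"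
proof -
  define \<mu> where "\<mu> = v \<bullet> (S *v v)"
  have orth: "w \<bullet> (S *v v - \<mu> *\<^sub>R v) = 0" if "w \<in> W" for w
  proof -
    have "(2 * (w \<bullet> (S *v v) - \<mu> * (v \<bullet> w))) * t + (w \<bullet> (S *v w) - \<mu> * (w \<bullet> w)) * t\<^sup>2 \<le> 0"
      for t :: real
    proof -
      have "v + t *\<^sub>R w \<in> W" using W v that by (simp add: subspace_add subspace_scale)
      then have "(v + t *\<^sub>R w) \<bullet> (S *v (v + t *\<^sub>R w)) \<le> \<mu> * ((v + t *\<^sub>R w) \<bullet> (v + t *\<^sub>R w))"
        unfolding \<mu>_def by (rule max)
      then show ?thesis
        using selfadjoint_inner_symmetric[OF S, of v w] v(2)
        by (simp add: \<mu>_def matrix_vector_right_distrib matrix_vector_mult_complex_scaleR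
            inner_add_left inner_add_right power2_eq_square algebra_simps inner_commute)
    qed
    then have "2 * (w \<bullet> (S *v v) - \<mu> * (v \<bullet> w)) = 0"
      by (rule linear_coeff_zero_if_quadratic_nonpos)
    then show ?thesis by (simp add: inner_diff_right inner_commute)
  qed
  have "S *v v - \<mu> *\<^sub>R v \<in> W" using W v by (simp add: subspace_diff subspace_scale)
  then have "(S *v v - \<mu> *\<^sub>R v) \<bullet> (S *v v - \<mu> *\<^sub>R v) = 0" by (rule orth)
  then show ?thesis by (simp add: \<mu>_def)
qed

lemma selfadjoint_eigenvector_in_invariant_subspace:
  fixes S :: "complex^'n^'n"
  assumes S: "adj S = S" and W: "subspace W" "W \<noteq> {0}" "\<And>x. x \<in> W \<Longrightarrow> S *v x \<in> W"
  shows "\<exists>v\<in>W. v \<noteq> 0 \<and> (\<exists>\<mu>::real. S *v v = \<mu> *\<^sub>R v)"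
proof -
  define q where "q v = v \<bullet> (S *v v)" for v
  define K where "K = W \<inter> sphere 0 1"
  have normalize_in_K: "(1 / norm y) *\<^sub>R y \<in> K" if "y \<in> W" "y \<noteq> 0" for y
    using W(1) that by (simp add: K_def subspace_scale)
  obtain w where "w \<in> W" "w \<noteq> 0" using W(1,2) subspace_0 by blast
  then have "K \<noteq> {}" using normalize_in_K by blast
  moreover have "compact K" unfolding K_def
    using W(1) by (intro closed_Int_compact closed_subspace compact_sphere)
  moreover have "continuous_on K q" unfolding q_def
    by (intro continuous_intros linear_continuous_on linear_conv_bounded_linear[THEN iffD1]
        matrix_vector_mul_linear)
  ultimately obtain v where v: "v \<in> K" "\<forall>y\<in>K. q y \<le> q v"
    using continuous_attains_sup by blast
  have "q y \<le> q v * (y \<bullet> y)" if "y \<in> W" for y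
  proof (cases "y = 0")
    case False
    then have "q ((1 / norm y) *\<^sub>R y) \<le> q v" using v normalize_in_K[OF that] by blast
    then have "q y / (norm y)\<^sup>2 \<le> q v"
      by (simp add: q_def matrix_vector_mult_complex_scaleR power2_eq_square)
    then show ?thesis using False by (simp add: divide_le_eq power2_norm_eq_inner)
  qed (simp add: q_def)
  then have "S *v v = q v *\<^sub>R v"
    using v(1) unfolding q_def K_def
    by (intro rayleigh_maximizer_is_eigenvector[OF S W(1,3)]) (auto simp: norm_eq_1)
  moreover have "v \<in> W" "v \<noteq> 0" using v(1) by (auto simp: K_def)
  ultimately show ?thesis by blast
qed

lemma commuting_selfadjoint_common_eigenvector:
  fixes Ss :: "(complex^'n^'n) set"
  assumes "finite Ss" "\<And>S. S \<in> Ss \<Longrightarrow> adj S = S"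
    and "\<And>S T. S \<in> Ss \<Longrightarrow> T \<in> Ss \<Longrightarrow> S ** T = T ** S"
    and "subspace W" "W \<noteq> {0}" "\<And>S x. S \<in> Ss \<Longrightarrow> x \<in> W \<Longrightarrow> S *v x \<in> W"
  shows "\<exists>v\<in>W. v \<noteq> 0 \<and> (\<forall>S\<in>Ss. \<exists>\<mu>::real. S *v v = \<mu> *\<^sub>R v)"
  using assms
proof (induction Ss arbitrary: W rule: finite_induct)
  case empty
  then show ?case using subspace_0 by blast
next
  case (insert S Ss)
  obtain v \<mu> where "v \<in> W" "v \<noteq> 0" "S *v v = \<mu> *\<^sub>R v"
    using selfadjoint_eigenvector_in_invariant_subspace[of S W] insert.prems by blast
  define E where "E = {x\<in>W. S *v x = \<mu> *\<^sub>R x}"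
  have "subspace E" using insert.prems(3)
    by (auto simp: subspace_def E_def matrix_vector_right_distrib
        matrix_vector_mult_complex_scaleR scaleR_right_distrib)
  moreover have "E \<noteq> {0}" using \<open>v \<in> W\<close> \<open>v \<noteq> 0\<close> \<open>S *v v = \<mu> *\<^sub>R v\<close> by (auto simp: E_def)
  moreover have "T *v x \<in> E" if "T \<in> Ss" "x \<in> E" for T x
  proof -
    have "S *v (T *v x) = T *v (S *v x)"
      using insert.prems(2)[of S T] that by (simp add: matrix_vector_mul_assoc)
    then show ?thesis
      using insert.prems(5)[of T x] that by (auto simp: E_def matrix_vector_mult_complex_scaleR)
  qed
  ultimately obtain w where "w \<in> E" "w \<noteq> 0" "\<forall>T\<in>Ss. \<exists>\<mu>::real. T *v w = \<mu> *\<^sub>R w"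
    using insert.IH[of E] insert.prems(1,2) by blast
  then show ?case by (auto simp: E_def)
qed

lemma exists_nonzero_orthogonal:
  fixes e :: "complex^'n"
  assumes "CARD('n) \<ge> 2"
  shows "\<exists>v. v \<noteq> 0 \<and> cinner e v = 0"
proof -
  obtain i j :: 'n where "i \<noteq> j"
    using assms by (metis One_nat_def card_le_Suc0_iff_eq finite not_less_eq_eq numeral_2_eq_2)
  have cinner_axis: "cinner e (axis k 1) = cnj (e$k)" for k
    by (simp add: cinner_def axis_def if_distrib cong: if_cong)
  show ?thesis
  proof (cases "e$i = 0")
    case True
    then show ?thesis using cinner_axis by (metis axis_eq_0_iff complex_cnj_zero one_neq_zero)
  next
    case False
    define v where "v = cnj (e$j) *s axis i 1 - cnj (e$i) *s axis j (1::complex)"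
    have "v$j = - cnj (e$i)" using \<open>i \<noteq> j\<close> by (simp add: v_def axis_def)
    then have "v \<noteq> 0" using False by auto
    moreover have "cinner e v = 0"
      by (simp add: v_def cinner_diff_right cinner_scale_right cinner_axis)
    ultimately show ?thesis by blast
  qed
qed

lemma commuting_selfadjoint_common_unit_eigenvector:
  fixes Ss :: "(complex^'n^'n) set"
  assumes Ss: "finite Ss" "\<And>S. S \<in> Ss \<Longrightarrow> adj S = S"
      "\<And>S T. S \<in> Ss \<Longrightarrow> T \<in> Ss \<Longrightarrow> S ** T = T ** S"
    and W: "subspace W" "W \<noteq> {0}" "\<And>S x. S \<in> Ss \<Longrightarrow> x \<in> W \<Longrightarrow> S *v x \<in> W"
  shows "\<exists>e\<in>W. cinner e e = 1 \<and> (\<forall>S\<in>Ss. \<exists>\<mu>::real. S *v e = \<mu> *\<^sub>R e)"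
proof -
  obtain v where v: "v \<in> W" "v \<noteq> 0" "\<forall>S\<in>Ss. \<exists>\<mu>::real. S *v v = \<mu> *\<^sub>R v"
    using commuting_selfadjoint_common_eigenvector[OF Ss W] by blast
  define e where "e = (1 / norm v) *\<^sub>R v"
  have "cinner e e = 1" unfolding e_def using v(2) by (rule cinner_normalize_self)
  moreover have "e \<in> W" unfolding e_def using W(1) v(1) by (rule subspace_scale)
  moreover have "\<exists>\<mu>::real. S *v e = \<mu> *\<^sub>R e" if "S \<in> Ss" for S
    using v(3) that by (metis e_def matrix_vector_mult_complex_scaleR scaleR_left_commute)
  ultimately show ?thesis by blast
qed

lemma commuting_selfadjoint_orthonormal_common_eigenvectors:
  fixes Ss :: "(complex^'n^'n) set"
  assumes Ss: "finite Ss" "\<And>S. S \<in> Ss \<Longrightarrow> adj S = S"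
      "\<And>S T. S \<in> Ss \<Longrightarrow> T \<in> Ss \<Longrightarrow> S ** T = T ** S"
    and dim: "CARD('n) \<ge> 2"
  shows "\<exists>e\<^sub>1 e\<^sub>2. cinner e\<^sub>1 e\<^sub>1 = 1 \<and> cinner e\<^sub>2 e\<^sub>2 = 1 \<and> cinner e\<^sub>1 e\<^sub>2 = 0 \<and>
    (\<forall>S\<in>Ss. (\<exists>\<mu>::real. S *v e\<^sub>1 = \<mu> *\<^sub>R e\<^sub>1) \<and> (\<exists>\<mu>::real. S *v e\<^sub>2 = \<mu> *\<^sub>R e\<^sub>2))"
proof -
  have "(1::complex^'n) \<noteq> 0" by (simp add: vec_eq_iff)
  then have "UNIV \<noteq> {0::complex^'n}" by blast
  then obtain e\<^sub>1 where e\<^sub>1: "cinner e\<^sub>1 e\<^sub>1 = 1" "\<forall>S\<in>Ss. \<exists>\<mu>::real. S *v e\<^sub>1 = \<mu> *\<^sub>R e\<^sub>1"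
    using commuting_selfadjoint_common_unit_eigenvector[OF Ss subspace_UNIV] by blast
  define W where "W = {v. cinner e\<^sub>1 v = 0}"
  have W_subspace: "subspace W"
    by (auto simp: subspace_def W_def cinner_add_right scaleR_eq_complex_scale cinner_scale_right)
  have W_nonzero: "W \<noteq> {0}" using exists_nonzero_orthogonal[OF dim, of e\<^sub>1] by (auto simp: W_def)
  have W_invariant: "S *v x \<in> W" if S: "S \<in> Ss" and x: "x \<in> W" for S x
  proof -
    obtain \<mu> :: real where "S *v e\<^sub>1 = \<mu> *\<^sub>R e\<^sub>1" using e\<^sub>1(2) S by blast
    then have "cinner e\<^sub>1 (S *v x) = cnj (complex_of_real \<mu>) * cinner e\<^sub>1 x"
      using Ss(2)[OF S]
      by (simp add: cinner_adj_right scaleR_eq_complex_scale cinner_scale_left)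
    then show ?thesis using x by (simp add: W_def)
  qed
  obtain e\<^sub>2 where "cinner e\<^sub>2 e\<^sub>2 = 1" "e\<^sub>2 \<in> W" "\<forall>S\<in>Ss. \<exists>\<mu>::real. S *v e\<^sub>2 = \<mu> *\<^sub>R e\<^sub>2"
    using commuting_selfadjoint_common_unit_eigenvector[OF Ss W_subspace W_nonzero W_invariant]
    by blast
  moreover from \<open>e\<^sub>2 \<in> W\<close> have "cinner e\<^sub>1 e\<^sub>2 = 0" by (simp add: W_def)
  ultimately show ?thesis using e\<^sub>1 by blast
qed

section \<open>Common eigenvectors of commuting unitaries\<close>

text \<open>\<open>X = (re_part X + \<i> * im_part X) / 2\<close> with self-adjoint parts.\<close>
definition re_part :: "complex^'n^'n \<Rightarrow> complex^'n^'n" where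
  "re_part X = X + adj X"

definition im_part :: "complex^'n^'n \<Rightarrow> complex^'n^'n" where
  "im_part X = csmult \<i> (adj X - X)"

lemma adj_re_part: "adj (re_part X) = re_part X"
  by (simp add: re_part_def adj_def vec_eq_iff add.commute)

lemma adj_im_part: "adj (im_part X) = im_part X"
  by (simp add: im_part_def adj_def csmult_def vec_eq_iff algebra_simps)

lemma commuting_unitaries_parts_commute:
  fixes X Y :: "complex^'n^'n"
  assumes "unitary_op X" "unitary_op Y" "X ** Y = Y ** X"
    and "P \<in> {re_part X, im_part X}" "Q \<in> {re_part Y, im_part Y}"
  shows "P ** Q = Q ** P"
proof -
  have "X ** adj Y = adj Y ** X" using assms(2,3) by (rule unitary_commute_adj)
  moreover have "Y ** adj X = adj X ** Y" using assms(1,3) by (metis unitary_commute_adj)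
  moreover have "adj X ** adj Y = adj Y ** adj X" using assms(3) by (metis adj_matrix_mult)
  ultimately show ?thesis
    using assms(3-5)
    by (auto simp: re_part_def im_part_def matrix_add_ldistrib matrix_add_rdistrib
        matrix_diff_ldistrib matrix_diff_rdistrib csmult_matrix_mult_left csmult_matrix_mult_right)
      (simp_all add: csmult_def vec_eq_iff algebra_simps)
qed

definition phase_eigenvector :: "complex^'n^'n \<Rightarrow> complex^'n \<Rightarrow> bool" where
  "phase_eigenvector X e \<longleftrightarrow> (\<exists>l. X *v e = l *s e \<and> adj X *v e = cnj l *s e \<and> l * cnj l = 1)"

lemma phase_eigenvector_of_parts:
  fixes X :: "complex^'n^'n"
  assumes X: "unitary_op X" and e: "e \<noteq> 0"
    and "re_part X *v e = a *\<^sub>R e" "im_part X *v e = b *\<^sub>R e"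
  shows "phase_eigenvector X e"
proof -
  define l where "l = (complex_of_real a + \<i> * complex_of_real b) / 2"
  have "X = csmult (1/2) (re_part X + csmult \<i> (im_part X))"
    by (simp add: re_part_def im_part_def csmult_def adj_def vec_eq_iff algebra_simps)
  then have "X *v e = (1/2) *s (re_part X *v e + \<i> *s (im_part X *v e))"
    by (metis csmult_matrix_vector_mult matrix_vector_mult_add_rdistrib)
  also have "\<dots> = l *s e"
    by (simp add: assms(3,4) scaleR_eq_complex_scale l_def vec_eq_iff algebra_simps)
  finally have eigen: "X *v e = l *s e" .
  have "adj X = csmult (1/2) (re_part X - csmult \<i> (im_part X))"
    by (simp add: re_part_def im_part_def csmult_def adj_def vec_eq_iff algebra_simps)
  then have "adj X *v e = (1/2) *s (re_part X *v e - \<i> *s (im_part X *v e))"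
    by (metis csmult_matrix_vector_mult matrix_vector_mult_diff_rdistrib)
  also have "\<dots> = cnj l *s e"
    by (simp add: assms(3,4) scaleR_eq_complex_scale l_def vec_eq_iff algebra_simps)
  finally have adj_eigen: "adj X *v e = cnj l *s e" .
  have "1 *s e = adj X *v (X *v e)"
    using X by (simp add: unitary_op_def matrix_vector_mul_assoc)
  also have "\<dots> = (l * cnj l) *s e"
    by (simp add: eigen adj_eigen matrix_vector_mult_scaleC vector_smult_assoc)
  finally have "l * cnj l = 1" using e by (metis vector_mul_rcancel)
  with eigen adj_eigen show ?thesis unfolding phase_eigenvector_def by blast
qed

lemma commuting_unitaries_orthonormal_common_eigenvectors:
  fixes Us :: "(complex^'n^'n) set"
  assumes Us: "finite Us" "\<And>X. X \<in> Us \<Longrightarrow> unitary_op X"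
      "\<And>X Y. X \<in> Us \<Longrightarrow> Y \<in> Us \<Longrightarrow> X ** Y = Y ** X"
    and dim: "CARD('n) \<ge> 2"
  shows "\<exists>e\<^sub>1 e\<^sub>2. cinner e\<^sub>1 e\<^sub>1 = 1 \<and> cinner e\<^sub>2 e\<^sub>2 = 1 \<and> cinner e\<^sub>1 e\<^sub>2 = 0 \<and>
    (\<forall>X\<in>Us. phase_eigenvector X e\<^sub>1 \<and> phase_eigenvector X e\<^sub>2)"
proof -
  define Ss where "Ss = (\<Union>X\<in>Us. {re_part X, im_part X})"
  have "finite Ss" using Us(1) by (simp add: Ss_def)
  moreover have "adj S = S" if "S \<in> Ss" for S
    using that adj_re_part adj_im_part by (auto simp: Ss_def)
  moreover have "S ** T = T ** S" if "S \<in> Ss" "T \<in> Ss" for S T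
    using that Us(2,3) commuting_unitaries_parts_commute unfolding Ss_def by blast
  ultimately obtain e\<^sub>1 e\<^sub>2 where e: "cinner e\<^sub>1 e\<^sub>1 = 1" "cinner e\<^sub>2 e\<^sub>2 = 1" "cinner e\<^sub>1 e\<^sub>2 = 0"
    "\<forall>S\<in>Ss. (\<exists>\<mu>::real. S *v e\<^sub>1 = \<mu> *\<^sub>R e\<^sub>1) \<and> (\<exists>\<mu>::real. S *v e\<^sub>2 = \<mu> *\<^sub>R e\<^sub>2)"
    using commuting_selfadjoint_orthonormal_common_eigenvectors[OF _ _ _ dim] by blast
  have "phase_eigenvector X e" if X: "X \<in> Us" and e: "cinner e e = 1"
    and eigen: "\<forall>S\<in>Ss. \<exists>\<mu>::real. S *v e = \<mu> *\<^sub>R e" for X e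
  proof -
    obtain a b where "re_part X *v e = a *\<^sub>R e" "im_part X *v e = b *\<^sub>R e"
      using X eigen unfolding Ss_def by blast
    then show ?thesis
      using phase_eigenvector_of_parts Us(2)[OF X] cinner_self_eq_1_imp_nonzero[OF e]
      by blast
  qed
  with e show ?thesis by blast
qed

lemma phase_eigenvector_conj_expectation:
  assumes "phase_eigenvector V e"
  shows "cinner e ((V ** A ** adj V) *v e) = cinner e (A *v e)"
proof -
  obtain l where l: "V *v e = l *s e" "adj V *v e = cnj l *s e" "l * cnj l = 1"
    using assms unfolding phase_eigenvector_def by blast
  have "cinner e ((V ** A ** adj V) *v e) = cinner e (V *v (A *v (adj V *v e)))"
    by (simp add: matrix_vector_mul_assoc matrix_mul_assoc)
  also have "\<dots> = cinner (adj V *v e) (A *v (adj V *v e))"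
    by (rule cinner_adj_right)
  also have "\<dots> = (l * cnj l) * cinner e (A *v e)"
    by (simp add: l(2) matrix_vector_mult_scaleC cinner_scale_left cinner_scale_right mult.commute)
  finally show ?thesis by (simp add: l(3))
qed

section \<open>Commutativity of the representation\<close>

fun matrix_pow :: "'a::semiring_1^'n^'n \<Rightarrow> nat \<Rightarrow> 'a^'n^'n" where
  "matrix_pow X 0 = mat 1"
| "matrix_pow X (Suc k) = matrix_pow X k ** X"

lemma matrix_pow_add: "matrix_pow X m ** matrix_pow X k = matrix_pow X (m + k)"
  by (induction k) (simp_all add: matrix_mul_assoc)

lemma proj_unitary_rep_nat_pow:
  assumes "monoid G" "proj_unitary_rep G U" "x \<in> carrier G"
  shows "\<exists>c. U (x [^]\<^bsub>G\<^esub> k) = csmult c (matrix_pow (U x) k)"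
proof (induction k)
  case 0
  have "U (x [^]\<^bsub>G\<^esub> (0::nat)) = csmult 1 (matrix_pow (U x) 0)"
    using assms(2) by (simp add: proj_unitary_rep_def csmult_def vec_eq_iff)
  then show ?case by blast
next
  case (Suc k)
  then obtain c where c: "U (x [^]\<^bsub>G\<^esub> k) = csmult c (matrix_pow (U x) k)" by blast
  obtain \<omega> where "U (x [^]\<^bsub>G\<^esub> k \<otimes>\<^bsub>G\<^esub> x) = csmult \<omega> (U (x [^]\<^bsub>G\<^esub> k) ** U x)"
    using assms by (meson monoid.nat_pow_closed proj_unitary_rep_def)
  then have "U (x [^]\<^bsub>G\<^esub> Suc k) = csmult (\<omega> * c) (matrix_pow (U x) (Suc k))"
    using assms(1) by (simp add: c csmult_matrix_mult_left csmult_csmult)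
  then show ?case by blast
qed

lemma (in group) finite_cyclic_group_nat_pow_generator:
  assumes "finite (carrier G)" "cyclic_group G"
  obtains x where "x \<in> carrier G" "\<And>y. y \<in> carrier G \<Longrightarrow> \<exists>k::nat. y = x [^] k"
proof -
  obtain x where x: "x \<in> carrier G" "carrier G = range (\<lambda>n::int. x [^] n)"
    using assms(2) cyclic_group by blast
  then have "carrier G = generate G {x}" by (simp add: generate_pow full_SetCompr_eq)
  then show thesis using that x(1) generate_pow_on_finite_carrier[OF assms(1) x(1)] by blast
qed

lemma cyclic_proj_unitary_rep_commute:
  assumes "group G" "finite (carrier G)" "cyclic_group G" "proj_unitary_rep G U"
    and "g \<in> carrier G" "h \<in> carrier G"
  shows "U g ** U h = U h ** U g"
proof -
  obtain x where x: "x \<in> carrier G" "\<And>y. y \<in> carrier G \<Longrightarrow> \<exists>k::nat. y = x [^]\<^bsub>G\<^esub> k"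
    using group.finite_cyclic_group_nat_pow_generator[OF assms(1-3)] by blast
  have "\<exists>c k. U y = csmult c (matrix_pow (U x) k)" if "y \<in> carrier G" for y
    using x(2)[OF that] proj_unitary_rep_nat_pow[OF group.is_monoid[OF assms(1)] assms(4) x(1)]
    by blast
  then obtain c\<^sub>g c\<^sub>h k\<^sub>g k\<^sub>h where
    "U g = csmult c\<^sub>g (matrix_pow (U x) k\<^sub>g)" "U h = csmult c\<^sub>h (matrix_pow (U x) k\<^sub>h)"
    using assms(5,6) by meson
  then show ?thesis
    by (simp add: csmult_matrix_mult_left csmult_matrix_mult_right csmult_csmult matrix_pow_add
        add.commute mult.commute)
qed

lemma rep_values_commute:
  assumes "comm_group G" "finite (carrier G)"
    and "unitary_rep G U \<or> (cyclic_group G \<and> proj_unitary_rep G U)"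
    and "X \<in> U ` carrier G" "Y \<in> U ` carrier G"
  shows "X ** Y = Y ** X"
proof -
  interpret comm_group G by (rule assms(1))
  obtain g h where gh: "g \<in> carrier G" "h \<in> carrier G" "X = U g" "Y = U h"
    using assms(4,5) by blast
  show ?thesis
  proof (cases "unitary_rep G U")
    case True
    then have "U (g \<otimes>\<^bsub>G\<^esub> h) = X ** Y" "U (h \<otimes>\<^bsub>G\<^esub> g) = Y ** X"
      using gh unfolding unitary_rep_def by simp_all
    then show ?thesis using m_comm[OF gh(1,2)] by simp
  next
    case False
    then show ?thesis
      using assms(2,3) cyclic_proj_unitary_rep_commute[OF is_group] gh
      by blast
  qed
qed

section \<open>Covariant observables\<close>

lemma covariant_observable_expectation:
  assumes G: "group G" "subgroup H G"
    and M: "observable (lcosets\<^bsub>G\<^esub> H) M" "covariant G H U M"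
    and e: "cinner e e = 1" "\<And>g. g \<in> carrier G \<Longrightarrow> phase_eigenvector (U g) e"
    and x: "x \<in> lcosets\<^bsub>G\<^esub> H"
  shows "cinner e (M x *v e) = 1 / of_nat (card (lcosets\<^bsub>G\<^esub> H))"
proof -
  have "\<one>\<^bsub>G\<^esub> <#\<^bsub>G\<^esub> H = H"
    using group.lcos_mult_one[OF G(1) subgroup.subset[OF G(2)]] .
  then have H_coset: "H \<in> lcosets\<^bsub>G\<^esub> H"
    unfolding LCOSETS_def using group.is_monoid[OF G(1)] monoid.one_closed by blast
  have expectation_constant: "cinner e (M y *v e) = cinner e (M H *v e)"
    if y: "y \<in> lcosets\<^bsub>G\<^esub> H" for y
  proof -
    obtain g where g: "g \<in> carrier G" "y = g <#\<^bsub>G\<^esub> H"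
      using y unfolding LCOSETS_def by blast
    then have "M y = U g ** M H ** adj (U g)"
      using M(2) H_coset unfolding covariant_def by simp
    then show ?thesis using phase_eigenvector_conj_expectation[OF e(2)[OF g(1)]] by simp
  qed
  have "1 = cinner e ((\<Sum>y\<in>lcosets\<^bsub>G\<^esub> H. M y) *v e)"
    using M(1) e(1) by (simp add: observable_def)
  also have "\<dots> = of_nat (card (lcosets\<^bsub>G\<^esub> H)) * cinner e (M H *v e)"
    by (simp add: cinner_sum_right expectation_constant)
  finally have "of_nat (card (lcosets\<^bsub>G\<^esub> H)) * cinner e (M H *v e) = 1" ..
  then show ?thesis
    using expectation_constant[OF x] by (auto simp: eq_divide_eq mult.commute)
qed

definition outer :: "complex^'n \<Rightarrow> complex^'n^'n" where
  "outer e = (\<chi> i j. e$i * cnj (e$j))"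

lemma outer_mult_vector: "outer e *v v = cinner e v *s e"
  by (simp add: outer_def cinner_def matrix_vector_mult_def vec_eq_iff sum_distrib_left mult_ac)

lemma trace_outer_mult: "trace (outer e ** A) = cinner e (A *v e)"
proof -
  have "trace (outer e ** A) = (\<Sum>i\<in>UNIV. \<Sum>j\<in>UNIV. e$i * cnj (e$j) * A$j$i)"
    by (simp add: trace_def outer_def matrix_matrix_mult_def)
  also have "\<dots> = (\<Sum>j\<in>UNIV. \<Sum>i\<in>UNIV. e$i * cnj (e$j) * A$j$i)" by (rule sum.swap)
  also have "\<dots> = cinner e (A *v e)"
    by (simp add: cinner_def matrix_vector_mult_def sum_distrib_left mult_ac)
  finally show ?thesis .
qed

lemma rank_outer:
  fixes e :: "complex^'n"
  assumes "e \<noteq> 0"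
  shows "rank (outer e) = 1"
proof -
  define ce :: "complex^'n" where "ce = (\<chi> j. cnj (e$j))"
  have row_outer: "row i (outer e) = e$i *s ce" for i
    by (simp add: row_def outer_def ce_def vec_eq_iff)
  have "rows (outer e) \<subseteq> vec.span {ce}"
    by (auto simp: rows_def row_outer intro!: vec.span_scale[OF vec.span_base])
  then have "vec.dim (rows (outer e)) \<le> 1"
    using vec.dim_le_card[of "rows (outer e)" "{ce}"] by simp
  moreover obtain i where "e$i \<noteq> 0" using assms by (auto simp: vec_eq_iff)
  then have "row i (outer e) \<noteq> 0" by (simp add: row_outer ce_def vec_eq_iff) (metis complex_cnj_zero_iff)
  then have "\<not> rows (outer e) \<subseteq> {0}" by (auto simp: rows_def)
  then have "vec.dim (rows (outer e)) \<noteq> 0" by simp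
  ultimately show ?thesis unfolding row_rank_def_gen by linarith
qed

lemma pure_state_outer:
  assumes "cinner e e = 1"
  shows "pure_state (outer e)"
proof -
  have "(outer e ** outer e)$i$k = outer e$i$k" for i k
  proof -
    have "(outer e ** outer e)$i$k = (\<Sum>j\<in>UNIV. e$i * cnj (e$k) * (cnj (e$j) * e$j))"
      by (simp add: outer_def matrix_matrix_mult_def mult_ac)
    also have "\<dots> = e$i * cnj (e$k) * cinner e e"
      by (simp add: cinner_def sum_distrib_left)
    finally show ?thesis using assms by (simp add: outer_def)
  qed
  then have "outer e ** outer e = outer e" by (simp add: vec_eq_iff)
  moreover have "adj (outer e) = outer e" by (simp add: outer_def adj_def vec_eq_iff mult.commute)
  ultimately show ?thesis
    using rank_outer[OF cinner_self_eq_1_imp_nonzero[OF assms]] by (simp add: pure_state_def)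
qed

lemma outer_orthonormal_neq:
  assumes "cinner e\<^sub>1 e\<^sub>1 = 1" "cinner e\<^sub>1 e\<^sub>2 = 0"
  shows "outer e\<^sub>1 \<noteq> outer e\<^sub>2"
proof -
  have "outer e\<^sub>1 *v e\<^sub>1 = e\<^sub>1" "outer e\<^sub>2 *v e\<^sub>1 = 0"
    using assms cinner_commute[of e\<^sub>2 e\<^sub>1] by (simp_all add: outer_mult_vector)
  then show ?thesis using cinner_self_eq_1_imp_nonzero[OF assms(1)] by metis
qed

theorem proposition5:
  fixes G :: "('g, 'b) monoid_scheme" and U :: "'g \<Rightarrow> complex^'n^'n" and H :: "'g set"
  assumes "comm_group G" and "finite (carrier G)"
    and "CARD('n) \<ge> 2"
    and "subgroup H G" and "H \<noteq> carrier G"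
    and "unitary_rep G U \<or> (cyclic_group G \<and> proj_unitary_rep G U)"
  shows "\<not> (\<exists>M :: 'g set \<Rightarrow> complex^'n^'n.
            observable (lcosets\<^bsub>G\<^esub> H) M \<and> covariant G H U M \<and> PIC (lcosets\<^bsub>G\<^esub> H) M)"
proof
  assume "\<exists>M :: 'g set \<Rightarrow> complex^'n^'n.
            observable (lcosets\<^bsub>G\<^esub> H) M \<and> covariant G H U M \<and> PIC (lcosets\<^bsub>G\<^esub> H) M"
  then obtain M :: "'g set \<Rightarrow> complex^'n^'n" where M: "observable (lcosets\<^bsub>G\<^esub> H) M"
    "covariant G H U M" and PIC: "PIC (lcosets\<^bsub>G\<^esub> H) M" by blast
  interpret comm_group G by (rule assms(1))
  have unitary: "unitary_op X" if "X \<in> U ` carrier G" for X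
    using assms(6) that unfolding unitary_rep_def proj_unitary_rep_def by blast
  obtain e\<^sub>1 e\<^sub>2 where e: "cinner e\<^sub>1 e\<^sub>1 = 1" "cinner e\<^sub>2 e\<^sub>2 = 1" "cinner e\<^sub>1 e\<^sub>2 = 0"
    "\<forall>X\<in>U ` carrier G. phase_eigenvector X e\<^sub>1 \<and> phase_eigenvector X e\<^sub>2"
    using commuting_unitaries_orthonormal_common_eigenvectors[OF finite_imageI[OF assms(2)]
        unitary rep_values_commute[OF assms(1,2,6)] assms(3)] by blast
  obtain x where "x \<in> lcosets\<^bsub>G\<^esub> H" "trace (outer e\<^sub>1 ** M x) \<noteq> trace (outer e\<^sub>2 ** M x)"
    using PIC pure_state_outer[OF e(1)] pure_state_outer[OF e(2)] outer_orthonormal_neq[OF e(1,3)]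
    unfolding PIC_def by blast
  moreover have "phase_eigenvector (U g) e\<^sub>1" "phase_eigenvector (U g) e\<^sub>2" if "g \<in> carrier G" for g
    using e(4) that by blast+
  ultimately show False
    using covariant_observable_expectation[OF is_group assms(4) M] e(1,2)
    by (simp add: trace_outer_mult)
qed

end
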